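(* Let $h$ be an admissible perturbation. Then $\psi^h$ is strictly convex on $\Pi_h$, its unique minimizer $\pi^h$ lies in $\mathrm{int}(\Pi_h)$ and satisfies $F^h(A\pi^h)=\pi^h$. Moreover, for every $\pi\in\mathrm{int}(\Pi_h)$ one has $F^h(A\pi)\in\mathrm{int}(\Pi_h)$ and $$\Upsilon(\pi):=\big(\tilde\nabla h(F^h(A\pi))-\tilde\nabla h(\pi)\big)'\big(F^h(A\pi)-\pi\big)\ge0,$$ with equality if and only if $\pi=\pi^h$.
   Context: Network: $\mathcal G=(\mathcal V,\mathcal E)$ is a finite directed graph with $\mathcal V=\{0,1,\dots,n\}$, containing no directed cycle, in which node $0$ is the unique node with no incoming link, node $n$ is the unique node with no outgoing link, there is a directed path from every node to $n$, and every link $(u,v)\in\mathcal E$ satisfies $u<v$. Each link $e$ has a flow-density function $\mu_e:[0,\infty)\to[0,\infty)$ that is continuously differentiable, strictly increasing, strictly concave, with $\mu_e(0)=0$ and $\mu_e'(0)<\infty$; its capacity is $C_e:=\lim_{\rho\to\infty}\mu_e(\rho)\in(0,+\infty]$; $\mathcal F:=\prod_{e\in\mathcal E}[0,C_e)$. The delay is $T_e(f_e)=\mu_e^{-1}(f_e)/f_e$ for $0<f_e<C_e$, $T_e(0)=1/\mu_e'(0)$, $T_e(f_e)=+\infty$ for $f_e\ge C_e$; $T(f):=(T_e(f_e))_e$. $\mathcal P$ is the set of directed paths from $0$ to $n$, $A\in\{0,1\}^{\mathcal E\times\mathcal P}$ the link-path incidence matrix ($A_{ep}=1$ iff $e\in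 p$), $\mathcal S(\mathcal P)=\{\pi\in\mathbb R_+^{\mathcal P}:\sum_p\pi_p=1\}$, $\Pi:=\{\pi\in\mathcal S(\mathcal P):(A\pi)_e<C_e\ \forall e\}$. The min-cut capacity $C^*:=\min\{\sum_{(u,v)\in\mathcal E:u\in\mathcal U,v\notin\mathcal U}C_{(u,v)}:\mathcal U\subseteq\mathcal V,0\in\mathcal U,n\notin\mathcal U\}$ is assumed to satisfy $C^*>1$. Perturbation: $\Phi:=I-|\mathcal P|^{-1}\mathbf 1\mathbf 1'$; interiors $\mathrm{int}$ and boundaries $\partial$ of subsets of $\mathcal S(\mathcal P)$ are relative to the hyperplane $\{x:\mathbf 1'x=1\}$. An admissible perturbation is a function $h:\Pi_h\to\mathbb R$, where $\Pi_h\subseteq\Pi$ is closed in $\mathbb R^{\mathcal P}$, convex, with nonempty interior, $h$ is strictly convex, twice differentiable on $\mathrm{int}(\Pi_h)$, and $\|\tilde\nabla h(\pi)\|\to+\infty$ as $\pi\to\partial\Pi_h$, where $\tilde\nabla h:=\Phi\nabla h$. Its perturbed best response is $F^h(f):=\arg\min_{\omega\in\Pi_h}\{\omega'A'T(f)+h(\omega)\}$ for $f\in\mathcal F$. Define $\psi^h(\pi):=\sum_{e\in\mathcal E}\int_0^{(A\pi)_e}T_e(s)\,ds+h(\pi)$ for $\pi\in\Pi_h$. *)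

theory Defs
  imports "HOL-Analysis.Analysis"
begin

definition strict_convex_on :: "'a::real_vector set \<Rightarrow> ('a \<Rightarrow> real) \<Rightarrow> bool" where
  "strict_convex_on S f \<longleftrightarrow>
     (\<forall>x\<in>S. \<forall>y\<in>S. x \<noteq> y \<longrightarrow> (\<forall>t::real. 0 < t \<and> t < 1 \<longrightarrow>
        f ((1 - t) *\<^sub>R x + t *\<^sub>R y) < (1 - t) * f x + t * f y))"

definition strict_concave_on :: "'a::real_vector set \<Rightarrow> ('a \<Rightarrow> real) \<Rightarrow> bool" where
  "strict_concave_on S f \<longleftrightarrow> strict_convex_on S (\<lambda>x. - f x)"

type_synonym link = "nat \<times> nat"

definition Paths :: "link set \<Rightarrow> nat \<Rightarrow> nat list set" where
  "Paths E n = {l. l \<noteq> [] \<and> hd l = 0 \<and> last l = n \<and> set (zip l (tl l)) \<subseteq> E}"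

definition path_links :: "nat list \<Rightarrow> link set" where
  "path_links l = set (zip l (tl l))"

definition cap :: "(link \<Rightarrow> real \<Rightarrow> real) \<Rightarrow> link \<Rightarrow> ereal" where
  "cap mu e = Lim at_top (\<lambda>r. ereal (mu e r))"

text \<open>Min-cut capacity (infimum over cuts; INF of the empty set is +oo).\<close>
definition mincut :: "link set \<Rightarrow> nat \<Rightarrow> (link \<Rightarrow> real \<Rightarrow> real) \<Rightarrow> ereal" where
  "mincut E n mu = (INF U\<in>{U. U \<subseteq> {0..n} \<and> 0 \<in> U \<and> n \<notin> U}.
       (\<Sum>e\<in>{e\<in>E. fst e \<in> U \<and> snd e \<notin> U}. cap mu e))"

text \<open>Delay T_e(f). Only evaluated for 0 <= f < C_e (where it is finite).
  dmu e is the derivative of mu e on [0,oo).\<close>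
definition delay :: "(link \<Rightarrow> real \<Rightarrow> real) \<Rightarrow> (link \<Rightarrow> real \<Rightarrow> real) \<Rightarrow> link \<Rightarrow> real \<Rightarrow> real" where
  "delay mu dmu e f = (if f = 0 then 1 / dmu e 0 else the_inv_into {0..} (mu e) f / f)"

text \<open>Link-path incidence: (A pi)_e, paths indexed by a finite type 'p via pth.\<close>
definition Aflow :: "('p::finite \<Rightarrow> nat list) \<Rightarrow> real^'p \<Rightarrow> link \<Rightarrow> real" where
  "Aflow pth \<pi> e = (\<Sum>p\<in>UNIV. if e \<in> path_links (pth p) then \<pi> $ p else 0)"

definition simplexP :: "(real^'p::finite) set" where
  "simplexP = {\<pi>. (\<forall>p. 0 \<le> \<pi> $ p) \<and> (\<Sum>p\<in>UNIV. \<pi> $ p) = 1}"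

definition hyperP :: "(real^'p::finite) set" where
  "hyperP = {x. (\<Sum>p\<in>UNIV. x $ p) = 1}"

definition hint :: "(real^'p::finite) set \<Rightarrow> (real^'p) set" where
  "hint X = (top_of_set hyperP) interior_of X"

definition hbd :: "(real^'p::finite) set \<Rightarrow> (real^'p) set" where
  "hbd X = (top_of_set hyperP) frontier_of X"

definition PiSet :: "link set \<Rightarrow> (link \<Rightarrow> real \<Rightarrow> real) \<Rightarrow> ('p::finite \<Rightarrow> nat list) \<Rightarrow> (real^'p) set" where
  "PiSet E mu pth = {\<pi>\<in>simplexP. \<forall>e\<in>E. ereal (Aflow pth \<pi> e) < cap mu e}"

definition Phi :: "real^'p::finite \<Rightarrow> real^'p" where
  "Phi x = (\<chi> i. x $ i - (\<Sum>j\<in>UNIV. x $ j) / real CARD('p))"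

definition br_obj :: "link set \<Rightarrow> (link \<Rightarrow> real \<Rightarrow> real) \<Rightarrow> (link \<Rightarrow> real \<Rightarrow> real) \<Rightarrow>
    ('p::finite \<Rightarrow> nat list) \<Rightarrow> (real^'p \<Rightarrow> real) \<Rightarrow> (link \<Rightarrow> real) \<Rightarrow> real^'p \<Rightarrow> real" where
  "br_obj E mu dmu pth h f \<omega> = (\<Sum>e\<in>E. Aflow pth \<omega> e * delay mu dmu e (f e)) + h \<omega>"

definition Fh :: "link set \<Rightarrow> (link \<Rightarrow> real \<Rightarrow> real) \<Rightarrow> (link \<Rightarrow> real \<Rightarrow> real) \<Rightarrow>
    ('p::finite \<Rightarrow> nat list) \<Rightarrow> (real^'p) set \<Rightarrow> (real^'p \<Rightarrow> real) \<Rightarrow> (link \<Rightarrow> real) \<Rightarrow> real^'p" where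
  "Fh E mu dmu pth Pih h f = (THE \<omega>. \<omega> \<in> Pih \<and>
      (\<forall>\<omega>'\<in>Pih. br_obj E mu dmu pth h f \<omega> \<le> br_obj E mu dmu pth h f \<omega>'))"

definition psi :: "link set \<Rightarrow> (link \<Rightarrow> real \<Rightarrow> real) \<Rightarrow> (link \<Rightarrow> real \<Rightarrow> real) \<Rightarrow>
    ('p::finite \<Rightarrow> nat list) \<Rightarrow> (real^'p \<Rightarrow> real) \<Rightarrow> real^'p \<Rightarrow> real" where
  "psi E mu dmu pth h \<pi> = (\<Sum>e\<in>E. integral {0..Aflow pth \<pi> e} (delay mu dmu e)) + h \<pi>"

end

theory Submission
  imports Defs
begin

text \<open>
  The potential psi = L + h is the sum of the Beckmann potential
  L(pi) = sum_e integral_0^{(A pi)_e} T_e, whose gradient is the vector of path delays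
  c(pi) = A' T(A pi), and of the strictly convex perturbation h.  Since every delay T_e is
  nondecreasing, L is convex, so psi is strictly convex.  All feasible path flows lie in the
  hyperplane 1'x = 1, where gradients only matter modulo constants, i.e. through Phi.  The core
  analytic fact is a coercivity theorem (convex_interior_minimum_exists): a convex function on a
  compact convex subset K of the hyperplane whose projected gradient blows up at the relative
  boundary attains its minimum in the relative interior.  Adding a term with bounded gradient
  preserves the blow-up of Phi(gradient h), so both psi and the perturbed cost
  omega' c + h(omega) defining the best response have interior minimisers, which are stationary
  (Phi of the gradient vanishes).  Stationarity of the best response omega = F(A pi) turns
  Upsilon(pi) into the first-order decrease of the perturbed cost from pi to omega, which is
  at least the Bregman gap of h at pi, hence nonnegative and zero exactly when omega = pi, i.e.
  when pi is the minimiser of psi.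
\<close>

section \<open>Convex functions\<close>

lemma comb_eq: "(1 - t) *\<^sub>R z + t *\<^sub>R x = z + t *\<^sub>R (x - z)" for z x :: "'a::real_vector"
  by (simp add: algebra_simps)

lemma strict_convex_imp_convex_on:
  assumes "convex K" and "strict_convex_on K f"
  shows "convex_on K f"
proof (rule convex_onI[OF _ assms(1)])
  fix t :: real and x y
  assume "0 < t" "t < 1" "x \<in> K" "y \<in> K"
  with assms(2) show "f ((1 - t) *\<^sub>R x + t *\<^sub>R y) \<le> (1 - t) * f x + t * f y"
    by (cases "x = y") (auto simp: strict_convex_on_def scaleR_collapse algebra_simps less_imp_le)
qed

lemma strict_convex_on_add:
  assumes "convex_on K f" and "strict_convex_on K g"
  shows "strict_convex_on K (\<lambda>x. f x + g x)"
  unfolding strict_convex_on_def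
proof (intro ballI allI impI)
  fix x y and t :: real
  assume xy: "x \<in> K" "y \<in> K" "x \<noteq> y" and t: "0 < t \<and> t < 1"
  have "f ((1 - t) *\<^sub>R x + t *\<^sub>R y) \<le> (1 - t) * f x + t * f y"
    using convex_onD[OF assms(1)] xy t by simp
  moreover have "g ((1 - t) *\<^sub>R x + t *\<^sub>R y) < (1 - t) * g x + t * g y"
    using assms(2) xy t unfolding strict_convex_on_def by blast
  ultimately show "f ((1 - t) *\<^sub>R x + t *\<^sub>R y) + g ((1 - t) *\<^sub>R x + t *\<^sub>R y)
      < (1 - t) * (f x + g x) + t * (f y + g y)" by (simp add: algebra_simps)
qed

lemma strict_convex_min_unique:
  assumes "strict_convex_on K f" "convex K" "x \<in> K" "y \<in> K"
    and "\<forall>z\<in>K. f x \<le> f z" "\<forall>z\<in>K. f y \<le> f z"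
  shows "x = y"
proof (rule ccontr)
  assume "x \<noteq> y"
  define w where "w = (1 - 1/2::real) *\<^sub>R x + (1/2::real) *\<^sub>R y"
  have "w \<in> K" using assms(2-4) unfolding w_def convex_def by simp
  moreover have "f w < (1 - 1/2) * f x + (1/2) * f y"
    using assms(1)[unfolded strict_convex_on_def, rule_format, OF assms(3,4) \<open>x \<noteq> y\<close>, of "1/2"]
    unfolding w_def by simp
  ultimately show False using assms(3-6) by force
qed

lemma strict_convex_min_strict:
  assumes "strict_convex_on K f" "convex K" "x \<in> K" "\<forall>z\<in>K. f x \<le> f z" "y \<in> K" "y \<noteq> x"
  shows "f x < f y"
  using strict_convex_min_unique[OF assms(1,2,3,5) assms(4)] assms(4-6) by force

lemma convex_on_sum_fun:
  assumes "finite I" "convex K" "\<And>i. i \<in> I \<Longrightarrow> convex_on K (f i)"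
  shows "convex_on K (\<lambda>x. \<Sum>i\<in>I. f i x)"
  using assms by (induction I rule: finite_induct) (auto simp: convex_on_const)

lemma convex_on_compose_inner:
  fixes a :: "'a::real_inner"
  assumes "convex_on R F" "convex K" "\<And>x. x \<in> K \<Longrightarrow> x \<bullet> a \<in> R"
  shows "convex_on K (\<lambda>x. F (x \<bullet> a))"
proof (rule convex_onI[OF _ assms(2)])
  fix t :: real and x y
  assume "0 < t" "t < 1" "x \<in> K" "y \<in> K"
  then show "F (((1 - t) *\<^sub>R x + t *\<^sub>R y) \<bullet> a) \<le> (1 - t) * F (x \<bullet> a) + t * F (y \<bullet> a)"
    using convex_onD[OF assms(1)] assms(3) by (simp add: inner_add_left)
qed

text \<open>A convex function lies above its tangent hyperplanes, also at points of the boundary,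
  where only a one-sided derivative within K exists.\<close>
lemma convex_on_above_tangent_within:
  fixes G :: "'a::real_inner \<Rightarrow> real"
  assumes cvx: "convex_on K G" and z: "z \<in> K" and x: "x \<in> K"
    and D: "(G has_derivative (\<lambda>y. g \<bullet> y)) (at z within K)"
  shows "G z + g \<bullet> (x - z) \<le> G x"
proof -
  define \<gamma> where "\<gamma> t = z + t *\<^sub>R (x - z)" for t :: real
  have \<gamma>_eq: "\<gamma> t = (1 - t) *\<^sub>R z + t *\<^sub>R x" for t by (simp add: \<gamma>_def comb_eq)
  have "\<gamma> ` {0..1} \<subseteq> K"
    using convex_on_imp_convex[OF cvx] z x by (auto simp: \<gamma>_eq convex_alt)
  then have "(G has_derivative (\<lambda>y. g \<bullet> y)) (at (\<gamma> 0) within \<gamma> ` {0..1})"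
    using has_derivative_subset[OF D] by (simp add: \<gamma>_def)
  moreover have "(\<gamma> has_derivative (\<lambda>t. t *\<^sub>R (x - z))) (at 0 within {0..1})"
    unfolding \<gamma>_def by (auto intro!: derivative_eq_intros)
  ultimately have "((G \<circ> \<gamma>) has_real_derivative g \<bullet> (x - z)) (at 0 within {0..1})"
    unfolding has_field_derivative_def
    by (auto dest!: diff_chain_within[rotated] elim!: has_derivative_eq_rhs simp: inner_scaleR_right mult.commute)
  then have lim: "((\<lambda>t. (G (\<gamma> t) - G z) / t) \<longlongrightarrow> g \<bullet> (x - z)) (at_right 0)"
    by (simp add: has_field_derivative_iff at_within_Icc_at_right \<gamma>_def)
  have "\<forall>\<^sub>F t in at_right 0. (G (\<gamma> t) - G z) / t \<le> G x - G z"
    using eventually_at_right_real[OF zero_less_one]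
  proof eventually_elim
    case (elim t)
    then have "G (\<gamma> t) \<le> (1 - t) * G z + t * G x"
      using convex_onD[OF cvx] z x by (simp add: \<gamma>_eq)
    then have "G (\<gamma> t) - G z \<le> t * (G x - G z)" by (simp add: algebra_simps)
    with elim show ?case by (simp add: pos_divide_le_eq mult.commute)
  qed
  from tendsto_upperbound[OF lim this] show ?thesis by simp
qed

lemma strict_convex_above_tangent_within:
  fixes G :: "'a::real_inner \<Rightarrow> real"
  assumes "convex K" "strict_convex_on K G" "z \<in> K" "x \<in> K" "x \<noteq> z"
    and D: "(G has_derivative (\<lambda>y. g \<bullet> y)) (at z within K)"
  shows "G z + g \<bullet> (x - z) < G x"
proof -
  define w where "w = (1 - 1/2) *\<^sub>R z + (1/2::real) *\<^sub>R x"
  have w_eq: "w = z + (1/2::real) *\<^sub>R (x - z)"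
    using comb_eq[of "1/2" z x] unfolding w_def .
  have "w \<in> K" using assms(1,3,4) unfolding w_def convex_def by simp
  have "G z + g \<bullet> (w - z) \<le> G w"
    using convex_on_above_tangent_within[OF strict_convex_imp_convex_on[OF assms(1,2)] assms(3) \<open>w \<in> K\<close> D] .
  moreover have "G w < (1 - 1/2) * G z + (1/2) * G x"
    using assms(2)[unfolded strict_convex_on_def, rule_format, OF assms(3,4) assms(5)[symmetric], of "1/2"]
    unfolding w_def by simp
  ultimately show ?thesis by (simp add: w_eq inner_scaleR_right)
qed

text \<open>Via a tangent at one point, a differentiable convex function is bounded below on a compact set.\<close>
lemma convex_on_bdd_below:
  fixes G :: "'a::real_inner \<Rightarrow> real"
  assumes "compact K" "convex_on K G" "z \<in> K" "(G has_derivative (\<lambda>y. g \<bullet> y)) (at z within K)"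
  shows "bdd_below (G ` K)"
proof -
  obtain B where B: "\<forall>x\<in>K. norm x \<le> B" using compact_imp_bounded[OF assms(1)] bounded_iff by metis
  have "G z - norm g * (2 * B) \<le> G x" if x: "x \<in> K" for x
  proof -
    have "norm x \<le> B" "norm z \<le> B" using B x assms(3) by auto
    then have "norm (x - z) \<le> 2 * B" using norm_triangle_ineq4[of x z] by linarith
    then have "- (norm g * (2 * B)) \<le> g \<bullet> (x - z)"
      using norm_cauchy_schwarz[of "- g" "x - z"] mult_left_mono[of _ _ "norm g"] by force
    with convex_on_above_tangent_within[OF assms(2,3) x assms(4)] show ?thesis by linarith
  qed
  then show ?thesis by (rule bdd_belowI2)
qed

text \<open>A limit point l of a minimising sequence: along segments starting at l the function stays
  below the chord through the infimum, wherever it is continuous.\<close>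
lemma minimizing_limit_point:
  fixes G :: "'a::{real_normed_vector, first_countable_topology} \<Rightarrow> real"
  assumes K: "compact K" "K \<noteq> {}" and cvx: "convex_on K G" and bdd: "bdd_below (G ` K)"
  shows "\<exists>l\<in>K. \<forall>x\<in>K. \<forall>t\<in>{0..1}. continuous (at ((1 - t) *\<^sub>R l + t *\<^sub>R x) within K) G \<longrightarrow>
           G ((1 - t) *\<^sub>R l + t *\<^sub>R x) \<le> (1 - t) * Inf (G ` K) + t * G x"
proof -
  define m where "m = Inf (G ` K)"
  have "\<exists>x\<in>K. G x < m + inverse (real (Suc n))" for n
  proof -
    have "Inf (G ` K) < m + inverse (real (Suc n))" by (simp add: m_def)
    then show ?thesis using cInf_less_iff[of "G ` K"] K(2) bdd by auto
  qed
  then obtain xs where xs: "\<And>n. xs n \<in> K" "\<And>n. G (xs n) < m + inverse (real (Suc n))"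
    by metis
  obtain l r where l: "l \<in> K" and r: "strict_mono r" and lim: "(xs \<circ> r) \<longlonglongrightarrow> l"
    using seq_compactE[OF compact_imp_seq_compact[OF K(1)]] xs(1) by metis
  have upper: "(\<lambda>n. m + inverse (real (Suc (r n)))) \<longlonglongrightarrow> m"
    using LIMSEQ_subseq_LIMSEQ[OF tendsto_add[OF tendsto_const LIMSEQ_inverse_real_of_nat] r]
    by (simp add: o_def)
  have "G ((1 - t) *\<^sub>R l + t *\<^sub>R x) \<le> (1 - t) * m + t * G x"
    if x: "x \<in> K" and t: "t \<in> {0..1}" and cont: "continuous (at ((1 - t) *\<^sub>R l + t *\<^sub>R x) within K) G"
    for x t
  proof -
    define ys where "ys n = (1 - t) *\<^sub>R xs (r n) + t *\<^sub>R x" for n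
    have ysK: "ys n \<in> K" for n
      using convex_onD[OF cvx] convex_on_imp_convex[OF cvx] xs(1) x t
      by (simp add: ys_def convex_alt)
    have "ys \<longlonglongrightarrow> (1 - t) *\<^sub>R l + t *\<^sub>R x"
      unfolding ys_def using lim by (auto intro!: tendsto_intros simp: o_def)
    then have "(\<lambda>n. G (ys n)) \<longlonglongrightarrow> G ((1 - t) *\<^sub>R l + t *\<^sub>R x)"
      by (rule continuous_within_tendsto_compose'[of _ K G ys, OF cont ysK])
    moreover have "(\<lambda>n. (1 - t) * (m + inverse (real (Suc (r n)))) + t * G x) \<longlonglongrightarrow> (1 - t) * m + t * G x"
      by (intro tendsto_intros upper)
    moreover have "G (ys n) \<le> (1 - t) * (m + inverse (real (Suc (r n)))) + t * G x" for n
    proof -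
      have "G (ys n) \<le> (1 - t) * G (xs (r n)) + t * G x"
        using convex_onD[OF cvx] xs(1) x t by (simp add: ys_def)
      also have "\<dots> \<le> (1 - t) * (m + inverse (real (Suc (r n)))) + t * G x"
        using xs(2)[of "r n"] t by (intro add_right_mono mult_left_mono) auto
      finally show ?thesis .
    qed
    ultimately show ?thesis by (intro LIMSEQ_le) auto
  qed
  with l show ?thesis unfolding m_def by blast
qed

text \<open>One-dimensional core of the coercivity argument: a function that is squeezed between m and
  the chord m + s c near 0 cannot have a negative slope (in the sense of a supporting line) at t > 0.\<close>
lemma slope_nonneg_near_infimum:
  fixes \<phi> :: "real \<Rightarrow> real"
  assumes t: "0 < t" and below: "\<forall>s\<in>{0<..t}. m \<le> \<phi> s \<and> \<phi> s \<le> m + s * c"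
    and tangent: "\<forall>s\<in>{0<..<t}. \<phi> t + (s - t) * d \<le> \<phi> s"
  shows "0 \<le> d"
proof (rule ccontr)
  assume "\<not> 0 \<le> d"
  define a where "a = - d"
  have a: "a > 0" using \<open>\<not> 0 \<le> d\<close> by (simp add: a_def)
  have "m \<le> \<phi> t" "\<phi> t \<le> m + t * c" using below t by auto
  then have "0 \<le> t * c" by linarith
  then have "c \<ge> 0" using t by (simp add: zero_le_mult_iff)
  then have ca: "c + a > 0" using a by linarith
  define s where "s = t * a / (2 * (c + a))"
  have "0 < s" using t a ca by (simp add: s_def)
  have "s \<le> t / 2"
    using t a \<open>c \<ge> 0\<close> ca by (simp add: s_def divide_le_eq mult_left_mono)
  then have "s < t" using t by linarith
  have "m + (t - s) * a \<le> \<phi> t + (s - t) * d"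
    using \<open>m \<le> \<phi> t\<close> by (simp add: a_def algebra_simps)
  also have "\<dots> \<le> \<phi> s" using tangent \<open>0 < s\<close> \<open>s < t\<close> by simp
  also have "\<dots> \<le> m + s * c" using below \<open>0 < s\<close> \<open>s < t\<close> by simp
  finally have "t * a \<le> s * (c + a)" by (simp add: algebra_simps)
  also have "\<dots> = t * a / 2" using ca by (simp add: s_def field_simps)
  finally show False using t a by simp
qed

section \<open>The hyperplane of path distributions and the projection Phi\<close>

lemma hyperP_iff: "x \<in> hyperP \<longleftrightarrow> (\<Sum>p\<in>UNIV. x $ p) = 1"
  by (simp add: hyperP_def)

lemma closed_hyperP: "closed (hyperP :: (real^'p::finite) set)"
  unfolding hyperP_def by (intro closed_Collect_eq continuous_intros)

lemma sum_diff_hyperP: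
  "x \<in> hyperP \<Longrightarrow> y \<in> hyperP \<Longrightarrow> (\<Sum>p\<in>UNIV. (x - y) $ p) = 0"
  by (simp add: hyperP_iff sum_subtractf)

lemma hint_iff:
  fixes X :: "(real^'p::finite) set"
  shows "x \<in> hint X \<longleftrightarrow> x \<in> X \<and> x \<in> hyperP \<and> (\<exists>e>0. ball x e \<inter> hyperP \<subseteq> X)"
proof
  assume "x \<in> hint X"
  then obtain U where U: "open U" "x \<in> hyperP \<inter> U" "hyperP \<inter> U \<subseteq> X"
    unfolding hint_def interior_of_def openin_open by auto
  then obtain e where "e > 0" "ball x e \<subseteq> U" using open_contains_ball by blast
  with U show "x \<in> X \<and> x \<in> hyperP \<and> (\<exists>e>0. ball x e \<inter> hyperP \<subseteq> X)" by blast
next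
  assume "x \<in> X \<and> x \<in> hyperP \<and> (\<exists>e>0. ball x e \<inter> hyperP \<subseteq> X)"
  then obtain e where "e > 0" "ball x e \<inter> hyperP \<subseteq> X" "x \<in> hyperP" by auto
  moreover have "openin (top_of_set hyperP) (hyperP \<inter> ball x e)" by (auto simp: openin_open)
  ultimately show "x \<in> hint X" unfolding hint_def interior_of_def by auto
qed

lemma hint_subset: "hint X \<subseteq> X"
  using hint_iff by blast

lemma hbd_eq:
  assumes "closed X" "X \<subseteq> hyperP"
  shows "hbd X = X - hint X"
proof -
  have "closedin (top_of_set hyperP) X"
    using assms closedin_closed_Int[of X hyperP] by (simp add: Int_absorb1 Int_commute)
  then show ?thesis unfolding hbd_def hint_def frontier_of_def by (simp add: closure_of_closedin)
qed

lemma Phi_sum: "(\<Sum>p\<in>UNIV. Phi v $ p) = 0"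
  by (simp add: Phi_def sum_subtractf)

lemma Phi_add: "Phi (a + b) = Phi a + Phi b"
  by (simp add: Phi_def vec_eq_iff sum.distrib add_divide_distrib)

lemma Phi_inner:
  fixes v d :: "real^'p::finite"
  assumes "(\<Sum>p\<in>UNIV. d $ p) = 0"
  shows "Phi v \<bullet> d = v \<bullet> d"
proof -
  have "Phi v \<bullet> d = (\<Sum>i\<in>UNIV. v $ i * d $ i) - ((\<Sum>j\<in>UNIV. v $ j) / real CARD('p)) * (\<Sum>i\<in>UNIV. d $ i)"
    by (simp add: Phi_def inner_vec_def left_diff_distrib sum_subtractf sum_distrib_left)
  with assms show ?thesis by (simp add: inner_vec_def)
qed

lemma inner_Phi_self: "v \<bullet> Phi v = norm (Phi v) ^ 2"
  using Phi_inner[OF Phi_sum, of v v] by (simp add: power2_norm_eq_inner)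

lemma norm_Phi_le: "norm (Phi v) \<le> norm v"
proof -
  have "norm (Phi v) * norm (Phi v) \<le> norm v * norm (Phi v)"
    using norm_cauchy_schwarz[of v "Phi v"] by (simp add: inner_Phi_self power2_eq_square)
  then show ?thesis by (cases "Phi v = 0") auto
qed

lemma Phi_zero_inner:
  "Phi v = 0 \<Longrightarrow> x \<in> hyperP \<Longrightarrow> y \<in> hyperP \<Longrightarrow> v \<bullet> (x - y) = 0"
  using Phi_inner[OF sum_diff_hyperP, of x y v] by simp

lemma filterlim_norm_Phi_add:
  assumes "filterlim (\<lambda>x. norm (Phi (g x))) at_top F" "\<forall>\<^sub>F x in F. norm (c x) \<le> C"
  shows "filterlim (\<lambda>x. norm (Phi (c x + g x))) at_top F"
proof (rule filterlim_at_top_mono[OF filterlim_tendsto_add_at_top[OF tendsto_const assms(1)]])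
  show "\<forall>\<^sub>F x in F. - C + norm (Phi (g x)) \<le> norm (Phi (c x + g x))"
    using assms(2)
  proof eventually_elim
    case (elim x)
    have "norm (Phi (g x)) \<le> norm (Phi (c x + g x)) + norm (Phi (c x))"
      using norm_triangle_ineq4[of "Phi (c x + g x)" "Phi (c x)"] by (simp add: Phi_add)
    then show ?case using norm_Phi_le[of "c x"] elim by linarith
  qed
qed

lemma segment_into_hint:
  fixes K :: "(real^'p::finite) set"
  assumes K: "convex K" "K \<subseteq> hyperP" and b: "b \<in> K" and z: "z \<in> hint K" and t: "0 < t" "t \<le> 1"
  shows "b + t *\<^sub>R (z - b) \<in> hint K"
proof -
  obtain \<epsilon> where \<epsilon>: "\<epsilon> > 0" "ball z \<epsilon> \<inter> hyperP \<subseteq> K" and zK: "z \<in> K"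
    using z hint_iff by metis
  define x where "x = b + t *\<^sub>R (z - b)"
  have xK: "x \<in> K" using K(1) b zK t unfolding x_def comb_eq[symmetric] convex_def by simp
  have "ball x (t * \<epsilon>) \<inter> hyperP \<subseteq> K"
  proof
    fix y assume y: "y \<in> ball x (t * \<epsilon>) \<inter> hyperP"
    define w where "w = b + (1/t) *\<^sub>R (y - b)"
    have yw: "y = (1 - t) *\<^sub>R b + t *\<^sub>R w" unfolding w_def using t by (simp add: algebra_simps)
    have "w - z = (1/t) *\<^sub>R (y - x)" unfolding w_def x_def using t by (simp add: algebra_simps)
    then have "dist z w < \<epsilon>"
      using y t by (simp add: dist_norm norm_minus_commute pos_divide_less_eq mult.commute)
    moreover have "w - b = (1/t) *\<^sub>R (y - b)" unfolding w_def by simp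
    then have "(\<Sum>p\<in>UNIV. (w - b) $ p) = 0"
      using sum_diff_hyperP[of y b] y b K(2) by (auto simp: sum_divide_distrib[symmetric])
    then have "w \<in> hyperP" using b K(2) by (auto simp: hyperP_iff sum_subtractf)
    ultimately have "w \<in> K" using \<epsilon> by auto
    then show "y \<in> K" using yw K(1) b t unfolding convex_def by simp
  qed
  moreover have "t * \<epsilon> > 0" using \<epsilon>(1) t by simp
  ultimately show ?thesis using xK K(2) unfolding x_def[symmetric] hint_iff by blast
qed

lemma hint_local_bound:
  fixes G :: "real^'p::finite \<Rightarrow> real"
  assumes z: "z \<in> hint K" and cont: "continuous_on (hint K) G"
  shows "\<exists>r>0. \<exists>M. \<forall>w\<in>cball z r \<inter> hyperP. w \<in> hint K \<and> G w \<le> M"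
proof -
  obtain \<epsilon> where \<epsilon>: "\<epsilon> > 0" "ball z \<epsilon> \<inter> hyperP \<subseteq> K" using z hint_iff by metis
  define S where "S = cball z (\<epsilon> / 2) \<inter> hyperP"
  have S_hint: "S \<subseteq> hint K"
  proof
    fix w assume w: "w \<in> S"
    have "ball w (\<epsilon> / 2) \<inter> hyperP \<subseteq> ball z \<epsilon> \<inter> hyperP"
    proof
      fix y assume "y \<in> ball w (\<epsilon> / 2) \<inter> hyperP"
      then show "y \<in> ball z \<epsilon> \<inter> hyperP"
        using w dist_triangle[of z y w] by (auto simp: S_def)
    qed
    moreover have "w \<in> ball z \<epsilon> \<inter> hyperP" using w \<epsilon> by (auto simp: S_def)
    moreover have "\<epsilon> / 2 > 0" using \<epsilon>(1) by simp
    ultimately show "w \<in> hint K" unfolding hint_iff using \<epsilon>(2) by blast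
  qed
  have "compact S" unfolding S_def using closed_hyperP by (intro compact_Int_closed) auto
  moreover have "z \<in> S" using z \<epsilon>(1) unfolding hint_iff by (simp add: S_def)
  then have "S \<noteq> {}" by blast
  moreover have "continuous_on S G" using continuous_on_subset[OF cont S_hint] .
  ultimately obtain w where "\<forall>y\<in>S. G y \<le> G w" using continuous_attains_sup by metis
  then show ?thesis using S_hint \<epsilon>(1) unfolding S_def by (intro exI[of _ "\<epsilon> / 2"]) auto
qed

lemma bounded_on_segment_not_blowup:
  fixes f :: "'a::real_normed_vector \<Rightarrow> 'b::real_normed_vector"
  assumes "z \<noteq> l" and seg: "\<And>t. t \<in> {0<..<1} \<Longrightarrow> l + t *\<^sub>R (z - l) \<in> S"
    and bnd: "\<And>t. t \<in> {0<..<1} \<Longrightarrow> norm (f (l + t *\<^sub>R (z - l))) \<le> B"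
  shows "\<not> filterlim (\<lambda>x. norm (f x)) at_top (at l within S)"
proof
  assume blowup: "filterlim (\<lambda>x. norm (f x)) at_top (at l within S)"
  have "((\<lambda>t. l + t *\<^sub>R (z - l)) \<longlongrightarrow> l) (at_right 0)"
    by (auto intro!: tendsto_eq_intros)
  moreover have "\<forall>\<^sub>F t in at_right 0. l + t *\<^sub>R (z - l) \<in> S \<and> l + t *\<^sub>R (z - l) \<noteq> l"
    using eventually_at_right_real[OF zero_less_one] by eventually_elim (use seg \<open>z \<noteq> l\<close> in auto)
  ultimately have "filterlim (\<lambda>t. l + t *\<^sub>R (z - l)) (at l within S) (at_right 0)"
    by (simp add: filterlim_at)
  from filterlim_compose[OF blowup this]
  have "\<forall>\<^sub>F t in at_right 0. B + 1 \<le> norm (f (l + t *\<^sub>R (z - l)))"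
    by (simp add: filterlim_at_top)
  with eventually_at_right_real[OF zero_less_one] have "\<forall>\<^sub>F t in at_right (0::real). False"
    by eventually_elim (use bnd in fastforce)
  then show False by simp
qed

section \<open>Minimisation on convex subsets of the hyperplane\<close>

lemma interior_min_stationary:
  fixes G :: "real^'p::finite \<Rightarrow> real"
  assumes z: "z \<in> hint K" and min: "\<forall>x\<in>K. G z \<le> G x"
    and D: "(G has_derivative (\<lambda>y. g \<bullet> y)) (at z within K)"
  shows "Phi g = 0"
proof -
  define v where "v = Phi g"
  obtain \<epsilon> where \<epsilon>: "\<epsilon> > 0" "ball z \<epsilon> \<inter> hyperP \<subseteq> K" and zH: "z \<in> hyperP"
    using z hint_iff by metis
  define \<delta> where "\<delta> = \<epsilon> / (norm v + 1)"
  have nv: "norm v + 1 > 0" by (smt (verit) norm_ge_zero)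
  then have \<delta>: "\<delta> > 0" using \<epsilon>(1) by (simp add: \<delta>_def)
  define S where "S = {-\<delta><..<\<delta>}"
  have line_in_K: "z + t *\<^sub>R v \<in> K" if "t \<in> S" for t
  proof -
    have "norm (t *\<^sub>R v) \<le> \<bar>t\<bar> * (norm v + 1)" by (simp add: mult_left_mono)
    also have "\<dots> < \<delta> * (norm v + 1)"
      using that nv by (intro mult_strict_right_mono) (auto simp: S_def)
    also have "\<dots> = \<epsilon>" using nv by (simp add: \<delta>_def)
    finally have "z + t *\<^sub>R v \<in> ball z \<epsilon>" by (simp add: dist_norm)
    moreover have "z + t *\<^sub>R v \<in> hyperP"
      using zH by (simp add: hyperP_iff sum.distrib v_def Phi_sum flip: sum_distrib_left)
    ultimately show ?thesis using \<epsilon> by blast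
  qed
  have line: "((\<lambda>t. z + t *\<^sub>R v) has_derivative (\<lambda>t. t *\<^sub>R v)) (at 0 within S)"
    by (auto intro!: derivative_eq_intros)
  have "(G has_derivative (\<lambda>y. g \<bullet> y)) (at (z + 0 *\<^sub>R v) within (\<lambda>t. z + t *\<^sub>R v) ` S)"
    using has_derivative_subset[OF D] line_in_K by (simp add: image_subset_iff)
  from diff_chain_within[OF line this]
  have "((\<lambda>t. G (z + t *\<^sub>R v)) has_real_derivative g \<bullet> v) (at 0 within S)"
    unfolding has_field_derivative_def
    by (auto elim!: has_derivative_eq_rhs simp: o_def inner_scaleR_right mult.commute)
  moreover have "at 0 within S = at (0::real)" using \<delta> by (intro at_within_open) (auto simp: S_def)
  ultimately have "DERIV (\<lambda>t. G (z + t *\<^sub>R v)) 0 :> g \<bullet> v" by simp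
  moreover have "\<forall>t. \<bar>0 - t\<bar> < \<delta> \<longrightarrow> G (z + 0 *\<^sub>R v) \<le> G (z + t *\<^sub>R v)"
    using min line_in_K by (auto simp: S_def abs_less_iff)
  ultimately have "g \<bullet> v = 0" using DERIV_local_min[OF _ \<delta>] by blast
  then show ?thesis by (simp add: v_def inner_Phi_self)
qed

text \<open>Conversely, a stationary point of a convex function is a global minimiser: the gradient only
  matters modulo constant vectors.\<close>
lemma stationary_imp_min:
  fixes G :: "real^'p::finite \<Rightarrow> real"
  assumes "convex_on K G" "K \<subseteq> hyperP" "z \<in> K" "Phi g = 0"
    and D: "(G has_derivative (\<lambda>y. g \<bullet> y)) (at z within K)"
  shows "\<forall>y\<in>K. G z \<le> G y"
  using convex_on_above_tangent_within[OF assms(1,3) _ D] Phi_zero_inner[OF assms(4)] assms(2,3)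
  by fastforce

text \<open>The projected gradient at x is controlled by the oscillation of the function on a relative ball
  around z, after testing the tangent inequality at x in the direction of Phi g.\<close>
lemma Phi_gradient_bound:
  fixes G :: "real^'p::finite \<Rightarrow> real"
  assumes cvx: "convex_on K G" and x: "x \<in> K" and z: "z \<in> hyperP" and r: "r \<ge> 0"
    and ball: "\<forall>w\<in>cball z r \<inter> hyperP. w \<in> K \<and> G w \<le> M"
    and D: "(G has_derivative (\<lambda>y. g \<bullet> y)) (at x within K)"
  shows "norm (Phi g) * r \<le> M - G x - g \<bullet> (z - x)"
proof -
  define w where "w = z + r *\<^sub>R sgn (Phi g)"
  have "w \<in> hyperP"
    using z by (simp add: w_def hyperP_iff sum.distrib sgn_div_norm Phi_sum flip: sum_distrib_left)
  moreover have "dist z w \<le> r" using r by (simp add: w_def dist_norm norm_sgn)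
  ultimately have w: "w \<in> K" "G w \<le> M" using ball by auto
  have "g \<bullet> sgn (Phi g) = norm (Phi g)"
    by (cases "Phi g = 0") (simp_all add: sgn_div_norm inner_Phi_self power2_eq_square)
  then have "g \<bullet> (w - x) = g \<bullet> (z - x) + r * norm (Phi g)"
    by (simp add: w_def algebra_simps inner_add_right)
  with convex_on_above_tangent_within[OF cvx x w(1) D] w(2) show ?thesis
    by (simp add: algebra_simps)
qed

lemma gradient_bounded_on_segment:
  fixes G :: "real^'p::finite \<Rightarrow> real"
  assumes cvx: "convex_on K G" and KH: "K \<subseteq> hyperP" and l: "l \<in> K" and z: "z \<in> hint K"
    and inf: "\<forall>x\<in>K. m \<le> G x"
    and chord: "\<forall>s\<in>{0<..1}. G (l + s *\<^sub>R (z - l)) \<le> (1 - s) * m + s * G z"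
    and D: "\<forall>x\<in>hint K. (G has_derivative (\<lambda>y. gG x \<bullet> y)) (at x within K)"
    and r: "r \<ge> 0" and ball: "\<forall>w\<in>cball z r \<inter> hyperP. w \<in> K \<and> G w \<le> M"
    and t: "0 < t" "t < 1"
  shows "norm (Phi (gG (l + t *\<^sub>R (z - l)))) * r \<le> M - m"
proof -
  define x where "x s = l + s *\<^sub>R (z - l)" for s
  define g where "g = gG (x t)"
  have x_hint: "x s \<in> hint K" if "0 < s" "s \<le> 1" for s
    using segment_into_hint[OF convex_on_imp_convex[OF cvx] KH l z that] by (simp add: x_def)
  then have xK: "x s \<in> K" if "0 < s" "s \<le> 1" for s using that hint_subset by blast
  have Dt: "(G has_derivative (\<lambda>y. g \<bullet> y)) (at (x t) within K)"
    using D x_hint t by (simp add: g_def)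
  have slope: "0 \<le> g \<bullet> (z - l)"
  proof (rule slope_nonneg_near_infimum[where \<phi> = "\<lambda>s. G (x s)" and m = m and c = "G z - m"])
    show "\<forall>s\<in>{0<..t}. m \<le> G (x s) \<and> G (x s) \<le> m + s * (G z - m)"
      using inf chord xK t by (auto simp: x_def algebra_simps)
    show "\<forall>s\<in>{0<..<t}. G (x t) + (s - t) * (g \<bullet> (z - l)) \<le> G (x s)"
    proof
      fix s assume s: "s \<in> {0<..<t}"
      have "G (x t) + g \<bullet> (x s - x t) \<le> G (x s)"
        using convex_on_above_tangent_within[OF cvx xK xK Dt] s t by simp
      moreover have "x s - x t = (s - t) *\<^sub>R (z - l)" by (simp add: x_def algebra_simps)
      ultimately show "G (x t) + (s - t) * (g \<bullet> (z - l)) \<le> G (x s)"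
        by (simp add: inner_scaleR_right)
    qed
  qed fact
  have "z - x t = (1 - t) *\<^sub>R (z - l)" by (simp add: x_def algebra_simps)
  then have "norm (Phi g) * r \<le> M - G (x t) - (1 - t) * (g \<bullet> (z - l))"
    using Phi_gradient_bound[OF cvx xK _ r ball Dt] z t unfolding hint_iff by (auto simp: inner_scaleR_right)
  moreover have "0 \<le> (1 - t) * (g \<bullet> (z - l))" using slope t by simp
  moreover have "m \<le> G (x t)" using inf xK t by simp
  ultimately show ?thesis unfolding g_def x_def by linarith
qed

theorem convex_interior_minimum_exists:
  fixes G :: "real^'p::finite \<Rightarrow> real" and gG :: "real^'p \<Rightarrow> real^'p"
  assumes K: "compact K" "K \<subseteq> hyperP" and z: "z \<in> hint K" and cvx: "convex_on K G"
    and D: "\<forall>x\<in>hint K. (G has_derivative (\<lambda>y. gG x \<bullet> y)) (at x within K)"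
    and blowup: "\<forall>b\<in>K - hint K. filterlim (\<lambda>x. norm (Phi (gG x))) at_top (at b within hint K)"
  shows "\<exists>x\<in>hint K. \<forall>y\<in>K. G x \<le> G y"
proof -
  have zK: "z \<in> K" using z hint_subset by blast
  have cont: "continuous (at x within K) G" if "x \<in> hint K" for x
    using D that has_derivative_continuous by blast
  have bdd: "bdd_below (G ` K)" using convex_on_bdd_below[OF K(1) cvx zK D[rule_format, OF z]] .
  define m where "m = Inf (G ` K)"
  have inf: "\<forall>x\<in>K. m \<le> G x" unfolding m_def using bdd by (auto intro: cInf_lower)
  obtain l where l: "l \<in> K" and chord_l: "\<forall>x\<in>K. \<forall>t\<in>{0..1}.
      continuous (at ((1 - t) *\<^sub>R l + t *\<^sub>R x) within K) G \<longrightarrow>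
      G ((1 - t) *\<^sub>R l + t *\<^sub>R x) \<le> (1 - t) * m + t * G x"
    using minimizing_limit_point[OF K(1) _ cvx bdd] zK unfolding m_def by blast
  show ?thesis
  proof (cases "l \<in> hint K")
    case True
    then have "G l \<le> (1 - 1/2) * m + 1/2 * G l"
      using chord_l[rule_format, OF l, of "1/2"] cont by (simp add: scaleR_collapse)
    then show ?thesis using True inf by force
  next
    case False
    have seg_hint: "l + s *\<^sub>R (z - l) \<in> hint K" if "0 < s" "s \<le> 1" for s
      using segment_into_hint[OF convex_on_imp_convex[OF cvx] K(2) l z that] .
    have chord: "\<forall>s\<in>{0<..1}. G (l + s *\<^sub>R (z - l)) \<le> (1 - s) * m + s * G z"
      using chord_l zK seg_hint cont by (auto simp: comb_eq)
    obtain r M where r: "r > 0" and ball: "\<forall>w\<in>cball z r \<inter> hyperP. w \<in> hint K \<and> G w \<le> M"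
      using hint_local_bound[OF z] cont continuous_on_eq_continuous_within
        continuous_within_subset[OF _ hint_subset] by metis
    have "\<forall>w\<in>cball z r \<inter> hyperP. w \<in> K \<and> G w \<le> M" using ball hint_subset by blast
    then have bounded: "norm (Phi (gG (l + t *\<^sub>R (z - l)))) \<le> (M - m) / r" if "t \<in> {0<..<1}" for t
      using gradient_bounded_on_segment[OF cvx K(2) l z inf chord D] r that
      by (auto simp: pos_le_divide_eq)
    have "z \<noteq> l" using z False by blast
    with bounded_on_segment_not_blowup[of z l "hint K" "\<lambda>x. Phi (gG x)"] seg_hint bounded
    have "\<not> filterlim (\<lambda>x. norm (Phi (gG x))) at_top (at l within hint K)" by auto
    then show ?thesis using blowup l False by blast
  qed
qed

section \<open>A single link\<close>

text \<open>A link is described by its flow-density function mu: differentiable, strictly increasing and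
  strictly concave with mu 0 = 0.  Its delay at flow f is density/flow, and cost is the integral of
  the delay (the link term of the Beckmann potential).\<close>
locale flow_density =
  fixes mu dmu :: "real \<Rightarrow> real"
  assumes mu_deriv: "\<forall>x\<ge>0. (mu has_real_derivative dmu x) (at x within {0..})"
    and mu_mono: "strict_mono_on {0..} mu"
    and mu_concave: "strict_concave_on {0..} mu"
    and mu_zero: "mu 0 = 0"
begin

definition density :: "real \<Rightarrow> real" where
  "density = the_inv_into {0..} mu"

text \<open>The flows the link can carry, i.e. the interval [0, C) below the capacity.\<close>
definition flows :: "real set" where
  "flows = mu ` {0..}"

text \<open>The delay (density per unit of flow), extended continuously to f = 0.\<close>
definition T :: "real \<Rightarrow> real" where
  "T f = (if f = 0 then 1 / dmu 0 else density f / f)"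

text \<open>The average rate mu(x)/x; the delay is its reciprocal along the inverse.\<close>
definition slope :: "real \<Rightarrow> real" where
  "slope x = (if x = 0 then dmu 0 else mu x / x)"

definition cost :: "real \<Rightarrow> real" where
  "cost s = integral {0..s} T"

lemma mu_less: "0 \<le> x \<Longrightarrow> x < y \<Longrightarrow> mu x < mu y"
  using strict_mono_onD[OF mu_mono] by simp

lemma mu_le: "0 \<le> x \<Longrightarrow> x \<le> y \<Longrightarrow> mu x \<le> mu y"
  using mu_less by (cases "x = y") (auto intro: less_imp_le)

lemma mu_pos: "0 < x \<Longrightarrow> 0 < mu x"
  using mu_less[of 0 x] mu_zero by simp

lemma density_mu: "0 \<le> x \<Longrightarrow> density (mu x) = x"
  unfolding density_def using the_inv_into_f_f[OF strict_mono_on_imp_inj_on[OF mu_mono]] by simp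

lemma mu_density: "f \<in> flows \<Longrightarrow> mu (density f) = f"
  unfolding density_def flows_def
  using f_the_inv_into_f[OF strict_mono_on_imp_inj_on[OF mu_mono]] by simp

lemma density_nonneg: "f \<in> flows \<Longrightarrow> 0 \<le> density f"
  unfolding density_def flows_def
  using the_inv_into_into[OF strict_mono_on_imp_inj_on[OF mu_mono], of f "{0..}"] by simp

lemma density_zero: "density 0 = 0"
  using density_mu[of 0] mu_zero by simp

lemma flows_nonneg: "f \<in> flows \<Longrightarrow> 0 \<le> f"
  unfolding flows_def using mu_le[of 0] mu_zero by auto

lemma density_pos: "f \<in> flows \<Longrightarrow> 0 < f \<Longrightarrow> 0 < density f"
  using density_nonneg[of f] mu_density[of f] mu_zero by (cases "density f = 0") auto

lemma density_mono: "f1 \<in> flows \<Longrightarrow> f2 \<in> flows \<Longrightarrow> f1 \<le> f2 \<Longrightarrow> density f1 \<le> density f2"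
  using mu_less[of "density f2" "density f1"] density_nonneg mu_density by fastforce

lemma mu_cont: "continuous_on {0..} mu"
  unfolding continuous_on_eq_continuous_within using mu_deriv DERIV_continuous by force

lemma flows_down_closed: "f \<in> flows \<Longrightarrow> 0 \<le> f' \<Longrightarrow> f' \<le> f \<Longrightarrow> f' \<in> flows"
proof -
  assume f: "f \<in> flows" "0 \<le> f'" "f' \<le> f"
  have "continuous_on {0..density f} mu" using continuous_on_subset[OF mu_cont] by auto
  then obtain x where "0 \<le> x" "x \<le> density f" "mu x = f'"
    using IVT'[of mu 0 f' "density f"] f mu_zero mu_density density_nonneg by auto
  then show ?thesis unfolding flows_def by auto
qed

lemma flows_no_max: "f \<in> flows \<Longrightarrow> \<exists>f'\<in>flows. f < f'"
  using mu_less[of "density f" "density f + 1"] density_nonneg mu_density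
  unfolding flows_def by force

lemma convex_flows: "convex flows"
proof (rule convexI)
  fix u v :: real and a b :: real
  assume "u \<in> flows" "v \<in> flows" "0 \<le> a" "0 \<le> b" "a + b = 1"
  moreover from this have "a * u + b * v \<le> max u v" "0 \<le> a * u + b * v"
    using convex_bound_le[of u "max u v" v a b] flows_nonneg by auto
  moreover have "max u v \<in> flows" using calculation by (simp add: max_def)
  ultimately show "a *\<^sub>R u + b *\<^sub>R v \<in> flows"
    using flows_down_closed[of "max u v"] by simp
qed

lemma flows_below_capacity:
  assumes s: "0 \<le> s" "ereal s < Lim at_top (\<lambda>r. ereal (mu r))"
  shows "s \<in> flows"
proof -
  define S where "S = (SUP r\<in>{0..}. ereal (mu r))"
  have "((\<lambda>r. ereal (mu r)) \<longlongrightarrow> S) at_top"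
  proof (rule order_tendstoI)
    fix a assume "a < S"
    then obtain r where r: "r \<ge> 0" "a < ereal (mu r)" unfolding S_def less_SUP_iff by auto
    show "\<forall>\<^sub>F x in at_top. a < ereal (mu x)"
      using eventually_ge_at_top[of r] by eventually_elim (use r mu_le in \<open>auto intro: less_le_trans\<close>)
  next
    fix a assume "S < a"
    show "\<forall>\<^sub>F x in at_top. ereal (mu x) < a"
      using eventually_ge_at_top[of 0]
    proof eventually_elim
      case (elim x)
      then have "ereal (mu x) \<le> S" unfolding S_def by (intro SUP_upper) auto
      then show ?case using \<open>S < a\<close> by simp
    qed
  qed
  then have "ereal s < S" using s(2) tendsto_Lim by force
  then obtain r where "0 \<le> r" "s < mu r" unfolding S_def less_SUP_iff by auto
  then show ?thesis using flows_down_closed[of "mu r" s] s(1) unfolding flows_def by auto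
qed

lemma mu_concave_on: "concave_on {0..} mu"
  using strict_convex_imp_convex_on[of "{0..}" "\<lambda>x. - mu x"] mu_concave
  by (simp add: strict_concave_on_def concave_on_def)

text \<open>By concavity, mu lies below its tangent at 0; in particular its slope at 0 is positive.\<close>
lemma mu_below_tangent: "0 \<le> x \<Longrightarrow> mu x \<le> dmu 0 * x"
proof -
  assume x: "0 \<le> x"
  have cvx: "convex_on {0..} (\<lambda>x. - mu x)"
    using mu_concave_on by (simp add: concave_on_def)
  have "((\<lambda>x. - mu x) has_derivative (\<lambda>y. (- dmu 0) \<bullet> y)) (at 0 within {0..})"
    using has_derivative_minus[OF mu_deriv[rule_format, of 0, unfolded has_field_derivative_def]]
    by (simp add: inner_real_def)
  from convex_on_above_tangent_within[OF cvx _ _ this] x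
  have "- mu 0 + (- dmu 0) \<bullet> (x - 0) \<le> - mu x" by simp
  then show ?thesis using mu_zero by (simp add: inner_real_def)
qed

lemma dmu_zero_pos: "0 < dmu 0"
  using mu_below_tangent[of 1] mu_pos[of 1] by simp

lemma slope_pos: "0 \<le> x \<Longrightarrow> 0 < slope x"
  using dmu_zero_pos mu_pos by (auto simp: slope_def)

text \<open>By concavity the average rate decreases.\<close>
lemma slope_antimono: "0 \<le> x \<Longrightarrow> x \<le> y \<Longrightarrow> slope y \<le> slope x"
proof -
  assume xy: "0 \<le> x" "x \<le> y"
  show ?thesis
  proof (cases "x = 0")
    case True
    then show ?thesis using mu_below_tangent[of y] xy by (auto simp: slope_def divide_le_eq mult.commute)
  next
    case False
    have "(1 - x / y) * mu 0 + (x / y) * mu y \<le> mu ((1 - x / y) *\<^sub>R 0 + (x / y) *\<^sub>R y)"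
      using concave_onD[OF mu_concave_on, of "x / y" 0 y] xy False by simp
    then have "(x / y) * mu y \<le> mu x" using xy False mu_zero by simp
    then show ?thesis using xy False by (simp add: slope_def field_simps)
  qed
qed

text \<open>At 0, continuity of the average rate is the differentiability of mu.\<close>
lemma slope_cont: "continuous_on {0..} slope"
  unfolding continuous_on_eq_continuous_within
proof
  fix x :: real assume x: "x \<in> {0..}"
  show "continuous (at x within {0..}) slope"
  proof (cases "x = 0")
    case True
    have "((\<lambda>y. mu y / y) \<longlongrightarrow> dmu 0) (at 0 within {0..})"
      using mu_deriv[rule_format, of 0] mu_zero by (simp add: has_field_derivative_iff)
    moreover have "\<forall>\<^sub>F y in at 0 within {0..}. mu y / y = slope y"
      by (simp add: eventually_at_filter slope_def)
    ultimately have "(slope \<longlongrightarrow> dmu 0) (at 0 within {0..})"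
      by (rule Lim_transform_eventually)
    then show ?thesis using True by (simp add: continuous_within slope_def)
  next
    case False
    then have "continuous (at x within {0..}) (\<lambda>y. mu y / y)"
      using mu_cont x by (auto intro!: continuous_intros simp: continuous_on_eq_continuous_within)
    then show ?thesis
      by (rule continuous_transform_within[of "x"]) (use x False in \<open>auto simp: slope_def dist_real_def\<close>)
  qed
qed

lemma T_eq_slope: "f \<in> flows \<Longrightarrow> T f = 1 / slope (density f)"
  using density_pos[of f] flows_nonneg[of f] mu_density[of f] density_zero
  by (cases "f = 0") (auto simp: T_def slope_def)

lemma T_pos: "f \<in> flows \<Longrightarrow> 0 < T f"
  using T_eq_slope slope_pos density_nonneg by simp

lemma T_mono: "f1 \<in> flows \<Longrightarrow> f2 \<in> flows \<Longrightarrow> f1 \<le> f2 \<Longrightarrow> T f1 \<le> T f2"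
  using T_eq_slope slope_pos slope_antimono density_nonneg density_mono
  by (simp add: frac_le)

text \<open>The delay is continuous (as the reciprocal of the average rate along the continuous inverse), so the
  cost is differentiable with derivative the delay.\<close>
lemma T_cont: "s \<in> flows \<Longrightarrow> continuous_on {0..s} T"
proof -
  assume s: "s \<in> flows"
  have sub: "{0..s} \<subseteq> flows" using flows_down_closed[OF s] by auto
  have "continuous_on {0..density s} mu" using continuous_on_subset[OF mu_cont] by auto
  then have "continuous_on (mu ` {0..density s}) density"
    by (rule continuous_on_inv) (auto simp: density_mu)
  moreover have "{0..s} \<subseteq> mu ` {0..density s}"
    using sub density_nonneg density_mono[OF _ s] mu_density by (force intro: rev_image_eqI)
  ultimately have "continuous_on {0..s} density" by (rule continuous_on_subset)
  moreover have "density ` {0..s} \<subseteq> {0..}" using sub density_nonneg by auto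
  moreover have "slope (density f) \<noteq> 0" if "f \<in> {0..s}" for f
    using slope_pos density_nonneg sub that by (metis less_irrefl subsetD)
  ultimately have "continuous_on {0..s} (\<lambda>f. 1 / slope (density f))"
    by (intro continuous_intros continuous_on_compose2[OF slope_cont]) auto
  then show ?thesis by (rule continuous_on_eq) (use sub T_eq_slope in auto)
qed

lemma cost_deriv: "s \<in> flows \<Longrightarrow> (cost has_real_derivative T s) (at s within {0..})"
proof -
  assume s: "s \<in> flows"
  obtain s' where s': "s' \<in> flows" "s < s'" using flows_no_max[OF s] by blast
  have "(cost has_real_derivative T s) (at s within {0..s'})"
    unfolding cost_def[abs_def] using integral_has_real_derivative[OF T_cont[OF s'(1)]] s s'
    by (simp add: flows_nonneg)
  moreover have "at s within {0..} = at s within {0..s'}"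
    by (rule at_within_nhd[of s "{..<s'}"]) (use s' in auto)
  ultimately show ?thesis by simp
qed

text \<open>Since the delay is nondecreasing, the cost lies above its tangent lines, hence is convex.\<close>
lemma cost_above_tangent: "w \<in> flows \<Longrightarrow> u \<in> flows \<Longrightarrow> cost w + T w * (u - w) \<le> cost u"
proof -
  assume wu: "w \<in> flows" "u \<in> flows"
  have split: "cost b - cost a = integral {a..b} T" and int: "T integrable_on {a..b}"
    if "a \<in> flows" "b \<in> flows" "a \<le> b" for a b
  proof -
    have "T integrable_on {0..b}" using T_cont[OF that(2)] by (rule integrable_continuous_real)
    then have "integral {0..a} T + integral {a..b} T = integral {0..b} T"
      using that flows_nonneg by (intro Henstock_Kurzweil_Integration.integral_combine) auto
    then show "cost b - cost a = integral {a..b} T" by (simp add: cost_def)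
    show "T integrable_on {a..b}"
      using integrable_continuous_real[OF continuous_on_subset[OF T_cont[OF that(2)]]]
        that flows_nonneg by auto
  qed
  have T_ge: "T a \<le> T x" if "a \<in> flows" "b \<in> flows" "x \<in> {a..b}" for a b x
  proof -
    have "x \<in> flows" using flows_down_closed[of b x] flows_nonneg[of a] that by auto
    then show ?thesis using T_mono that by auto
  qed
  have T_le: "T x \<le> T b" if "a \<in> flows" "b \<in> flows" "x \<in> {a..b}" for a b x
  proof -
    have "x \<in> flows" using flows_down_closed[of b x] flows_nonneg[of a] that by auto
    then show ?thesis using T_mono that by auto
  qed
  show ?thesis
  proof (cases "w \<le> u")
    case True
    have "(u - w) * T w = integral {w..u} (\<lambda>_. T w)" using True by simp
    also have "\<dots> \<le> integral {w..u} T"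
      by (rule integral_le[OF integrable_const_ivl int[OF wu True]]) (rule T_ge[OF wu])
    finally show ?thesis using split[OF wu True] by (simp add: algebra_simps)
  next
    case False
    then have uw: "u \<le> w" by simp
    have "integral {u..w} T \<le> integral {u..w} (\<lambda>_. T w)"
      by (rule integral_le[OF int[OF wu(2,1) uw] integrable_const_ivl]) (rule T_le[OF wu(2,1)])
    also have "\<dots> = (w - u) * T w" using uw by simp
    finally show ?thesis using split[OF wu(2,1) uw] by (simp add: algebra_simps)
  qed
qed

lemma cost_convex: "convex_on flows cost"
proof (rule convex_onI[OF _ convex_flows])
  fix t :: real and u v
  assume t: "0 < t" "t < 1" and uv: "u \<in> flows" "v \<in> flows"
  define w where "w = (1 - t) * u + t * v"
  have w: "w \<in> flows" using convexD[OF convex_flows uv, of "1 - t" t] t by (simp add: w_def)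
  have "(1 - t) * (cost w + T w * (u - w)) + t * (cost w + T w * (v - w)) \<le> (1 - t) * cost u + t * cost v"
    using cost_above_tangent[OF w uv(1)] cost_above_tangent[OF w uv(2)] t
    by (intro add_mono mult_left_mono) auto
  moreover have "(1 - t) * (cost w + T w * (u - w)) + t * (cost w + T w * (v - w)) = cost w"
    by (simp add: w_def algebra_simps)
  ultimately show "cost ((1 - t) *\<^sub>R u + t *\<^sub>R v) \<le> (1 - t) * cost u + t * cost v"
    by (simp add: w_def)
qed

end

section \<open>The perturbed routing model\<close>

text \<open>The routing data of the theorem.  Path distributions are vectors indexed by the paths; a link
  carries the total weight of the paths through it.\<close>
locale perturbed_routing =
  fixes E :: "link set" and mu dmu :: "link \<Rightarrow> real \<Rightarrow> real" and pth :: "'p::finite \<Rightarrow> nat list"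
    and Pih :: "(real^'p) set" and h :: "real^'p \<Rightarrow> real" and gh :: "real^'p \<Rightarrow> real^'p"
  assumes finite_E: "finite E"
    and links: "\<And>e. e \<in> E \<Longrightarrow> flow_density (mu e) (dmu e)"
    and Pih_closed: "closed Pih" and Pih_convex: "convex Pih" and Pih_sub: "Pih \<subseteq> PiSet E mu pth"
    and Pih_int: "hint Pih \<noteq> {}" and h_strict: "strict_convex_on Pih h"
    and h_grad: "\<forall>x\<in>hint Pih. (h has_derivative (\<lambda>y. gh x \<bullet> y)) (at x within Pih)"
    and h_blowup: "\<forall>b\<in>hbd Pih. filterlim (\<lambda>x. norm (Phi (gh x))) at_top (at b within hint Pih)"
begin

definition incid :: "link \<Rightarrow> real^'p" where
  "incid e = (\<chi> p. if e \<in> path_links (pth p) then 1 else 0)"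

definition path_cost :: "real^'p \<Rightarrow> real^'p" where
  "path_cost \<pi> = (\<Sum>e\<in>E. delay mu dmu e (\<pi> \<bullet> incid e) *\<^sub>R incid e)"

definition potential :: "real^'p \<Rightarrow> real" where
  "potential \<pi> = (\<Sum>e\<in>E. flow_density.cost (mu e) (dmu e) (\<pi> \<bullet> incid e))"

lemma Aflow_eq: "Aflow pth \<pi> e = \<pi> \<bullet> incid e"
  unfolding Aflow_def incid_def inner_vec_def by (rule sum.cong) auto

lemma delay_eq:
  assumes "e \<in> E"
  shows "delay mu dmu e = flow_density.T (mu e) (dmu e)"
proof -
  interpret flow_density "mu e" "dmu e" using links[OF assms] .
  show ?thesis by (simp add: fun_eq_iff delay_def T_def density_def)
qed

lemma cost_eq: "e \<in> E \<Longrightarrow> flow_density.cost (mu e) (dmu e) s = integral {0..s} (delay mu dmu e)"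
  using flow_density.cost_def[OF links] delay_eq by metis

lemma psi_eq: "psi E mu dmu pth h \<pi> = potential \<pi> + h \<pi>"
  unfolding psi_def potential_def Aflow_eq by (simp add: cost_eq)

lemma br_obj_eq: "br_obj E mu dmu pth h (Aflow pth \<pi>) \<omega> = \<omega> \<bullet> path_cost \<pi> + h \<omega>"
  unfolding br_obj_def path_cost_def Aflow_eq by (simp add: inner_sum_right mult.commute)

lemma Pih_hyperP: "Pih \<subseteq> hyperP"
  using Pih_sub by (auto simp: PiSet_def simplexP_def hyperP_def)

text \<open>Pih lies in the simplex, hence is compact.\<close>
lemma Pih_compact: "compact Pih"
proof -
  have "norm \<pi> \<le> 1" if "\<pi> \<in> Pih" for \<pi>
  proof -
    have "norm \<pi> \<le> (\<Sum>i\<in>UNIV. \<bar>\<pi> $ i\<bar>)" by (rule norm_le_l1_cart)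
    also have "\<dots> = 1" using that Pih_sub by (auto simp: PiSet_def simplexP_def)
    finally show ?thesis .
  qed
  then show ?thesis using Pih_closed by (auto simp: compact_eq_bounded_closed bounded_iff)
qed

lemma link_flow_feasible: "\<pi> \<in> Pih \<Longrightarrow> e \<in> E \<Longrightarrow> \<pi> \<bullet> incid e \<in> flow_density.flows (mu e)"
proof -
  assume \<pi>: "\<pi> \<in> Pih" and e: "e \<in> E"
  have "\<forall>q. 0 \<le> \<pi> $ q" using \<pi> Pih_sub by (auto simp: PiSet_def simplexP_def)
  then have "0 \<le> \<pi> \<bullet> incid e" unfolding inner_vec_def incid_def by (intro sum_nonneg) auto
  moreover have "ereal (\<pi> \<bullet> incid e) < Lim at_top (\<lambda>r. ereal (mu e r))"
    using \<pi> e Pih_sub by (auto simp: PiSet_def Aflow_eq cap_def)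
  ultimately show ?thesis using flow_density.flows_below_capacity[OF links[OF e]] by blast
qed

lemma potential_convex: "convex_on Pih potential"
  unfolding potential_def
proof (intro convex_on_sum_fun finite_E Pih_convex)
  fix e assume e: "e \<in> E"
  show "convex_on Pih (\<lambda>x. flow_density.cost (mu e) (dmu e) (x \<bullet> incid e))"
    using flow_density.cost_convex[OF links[OF e]] Pih_convex link_flow_feasible[OF _ e]
    by (rule convex_on_compose_inner)
qed

lemma potential_deriv:
  assumes \<pi>: "\<pi> \<in> Pih"
  shows "(potential has_derivative (\<lambda>y. path_cost \<pi> \<bullet> y)) (at \<pi> within Pih)"
proof -
  have link_deriv: "((\<lambda>x. flow_density.cost (mu e) (dmu e) (x \<bullet> incid e)) has_derivative
      (\<lambda>y. delay mu dmu e (\<pi> \<bullet> incid e) * (y \<bullet> incid e))) (at \<pi> within Pih)" if e: "e \<in> E" for e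
  proof -
    have "(flow_density.cost (mu e) (dmu e) has_derivative (\<lambda>x. delay mu dmu e (\<pi> \<bullet> incid e) * x))
        (at (\<pi> \<bullet> incid e) within (\<lambda>x. x \<bullet> incid e) ` Pih)"
      using flow_density.cost_deriv[OF links[OF e] link_flow_feasible[OF \<pi> e]]
        link_flow_feasible[OF _ e] flow_density.flows_nonneg[OF links[OF e]]
      unfolding has_field_derivative_def delay_eq[OF e]
      by (elim has_derivative_subset) (auto simp: image_subset_iff)
    from diff_chain_within[OF has_derivative_inner_left[OF has_derivative_ident] this]
    show ?thesis by (simp add: o_def)
  qed
  have "(potential has_derivative (\<lambda>y. \<Sum>e\<in>E. delay mu dmu e (\<pi> \<bullet> incid e) * (y \<bullet> incid e)))
      (at \<pi> within Pih)"
    unfolding potential_def[abs_def] by (rule has_derivative_sum) (use link_deriv in auto)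
  moreover have "path_cost \<pi> \<bullet> y = (\<Sum>e\<in>E. delay mu dmu e (\<pi> \<bullet> incid e) * (y \<bullet> incid e))" for y
    unfolding path_cost_def inner_sum_left by (simp add: inner_commute)
  ultimately show ?thesis by simp
qed

text \<open>Path delays are bounded on Pih: each link flow is dominated by its maximum over the compact set
  Pih, and delays are monotone.\<close>
lemma path_cost_bounded: "\<exists>C. \<forall>\<pi>\<in>Pih. norm (path_cost \<pi>) \<le> C"
proof -
  obtain z where z: "z \<in> Pih" using Pih_int hint_subset by blast
  have "\<exists>q\<in>Pih. \<forall>\<pi>\<in>Pih. \<pi> \<bullet> incid e \<le> q \<bullet> incid e" for e
  proof -
    have "continuous_on Pih (\<lambda>x. x \<bullet> incid e)" by (intro continuous_intros)
    then show ?thesis using continuous_attains_sup[OF Pih_compact] z by blast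
  qed
  then obtain M where M: "\<And>e. M e \<in> Pih" "\<And>e \<pi>. \<pi> \<in> Pih \<Longrightarrow> \<pi> \<bullet> incid e \<le> M e \<bullet> incid e"
    by metis
  have "norm (path_cost \<pi>) \<le> (\<Sum>e\<in>E. delay mu dmu e (M e \<bullet> incid e) * norm (incid e))"
    if \<pi>: "\<pi> \<in> Pih" for \<pi>
    unfolding path_cost_def
  proof (rule order_trans[OF norm_sum sum_mono])
    fix e assume e: "e \<in> E"
    note link = links[OF e] link_flow_feasible[OF \<pi> e] link_flow_feasible[OF M(1) e]
    have "0 < delay mu dmu e (\<pi> \<bullet> incid e)"
      using flow_density.T_pos[OF link(1,2)] delay_eq[OF e] by simp
    moreover have "delay mu dmu e (\<pi> \<bullet> incid e) \<le> delay mu dmu e (M e \<bullet> incid e)"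
      using flow_density.T_mono[OF link M(2)[OF \<pi>]] delay_eq[OF e] by simp
    ultimately show "norm (delay mu dmu e (\<pi> \<bullet> incid e) *\<^sub>R incid e)
        \<le> delay mu dmu e (M e \<bullet> incid e) * norm (incid e)"
      by (simp add: mult_right_mono)
  qed
  then show ?thesis by blast
qed

lemma perturbed_deriv:
  assumes "x \<in> hint Pih" "(q has_derivative (\<lambda>y. g \<bullet> y)) (at x within Pih)"
  shows "((\<lambda>x. q x + h x) has_derivative (\<lambda>y. (g + gh x) \<bullet> y)) (at x within Pih)"
  using has_derivative_add[OF assms(2) h_grad[rule_format, OF assms(1)]] by (simp add: inner_add_left)

text \<open>Adding to the perturbation any convex differentiable term with bounded gradient keeps the
  steepness at the relative boundary, so the minimum is attained in the relative interior.\<close>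
lemma perturbed_min_exists:
  assumes cvx: "convex_on Pih q" and D: "\<forall>x\<in>Pih. (q has_derivative (\<lambda>y. gq x \<bullet> y)) (at x within Pih)"
    and bnd: "\<forall>x\<in>Pih. norm (gq x) \<le> C"
  shows "\<exists>x\<in>hint Pih. \<forall>y\<in>Pih. q x + h x \<le> q y + h y"
proof -
  obtain z where z: "z \<in> hint Pih" using Pih_int by blast
  have sum_cvx: "convex_on Pih (\<lambda>x. q x + h x)"
    using cvx strict_convex_imp_convex_on[OF Pih_convex h_strict] by (rule convex_on_add)
  have sum_deriv: "\<forall>x\<in>hint Pih.
      ((\<lambda>x. q x + h x) has_derivative (\<lambda>y. (gq x + gh x) \<bullet> y)) (at x within Pih)"
    using D perturbed_deriv hint_subset by blast
  have sum_blowup: "\<forall>b\<in>Pih - hint Pih.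
      filterlim (\<lambda>x. norm (Phi (gq x + gh x))) at_top (at b within hint Pih)"
  proof
    fix b assume "b \<in> Pih - hint Pih"
    then have "filterlim (\<lambda>x. norm (Phi (gh x))) at_top (at b within hint Pih)"
      using h_blowup hbd_eq[OF Pih_closed Pih_hyperP] by blast
    moreover have "\<forall>\<^sub>F x in at b within hint Pih. norm (gq x) \<le> C"
      unfolding eventually_at_filter using bnd hint_subset by (intro always_eventually) blast
    ultimately show "filterlim (\<lambda>x. norm (Phi (gq x + gh x))) at_top (at b within hint Pih)"
      by (rule filterlim_norm_Phi_add)
  qed
  show ?thesis
    using convex_interior_minimum_exists[OF Pih_compact Pih_hyperP z sum_cvx sum_deriv sum_blowup] .
qed

lemma linear_cost_convex: "convex_on Pih (\<lambda>\<omega>. \<omega> \<bullet> c)"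
  by (rule convex_onI[OF _ Pih_convex]) (simp add: inner_add_left)

lemma best_response_strict_convex: "strict_convex_on Pih (\<lambda>\<omega>. \<omega> \<bullet> c + h \<omega>)"
  using linear_cost_convex h_strict by (rule strict_convex_on_add)

lemma best_response_eqI:
  assumes "\<omega> \<in> Pih" "\<forall>y\<in>Pih. \<omega> \<bullet> path_cost \<pi> + h \<omega> \<le> y \<bullet> path_cost \<pi> + h y"
  shows "Fh E mu dmu pth Pih h (Aflow pth \<pi>) = \<omega>"
  unfolding Fh_def br_obj_eq
proof (rule the_equality)
  fix \<omega>' assume "\<omega>' \<in> Pih \<and> (\<forall>y\<in>Pih. \<omega>' \<bullet> path_cost \<pi> + h \<omega>' \<le> y \<bullet> path_cost \<pi> + h y)"
  then show "\<omega>' = \<omega>"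
    using strict_convex_min_unique[OF best_response_strict_convex Pih_convex] assms by blast
qed (use assms in blast)

lemma best_response_interior:
  assumes "\<pi> \<in> Pih"
  defines "\<omega> \<equiv> Fh E mu dmu pth Pih h (Aflow pth \<pi>)"
  shows "\<omega> \<in> hint Pih" and "\<forall>y\<in>Pih. \<omega> \<bullet> path_cost \<pi> + h \<omega> \<le> y \<bullet> path_cost \<pi> + h y"
    and "Phi (path_cost \<pi> + gh \<omega>) = 0"
proof -
  define c where "c = path_cost \<pi>"
  have D: "((\<lambda>\<omega>. \<omega> \<bullet> c) has_derivative (\<lambda>y. c \<bullet> y)) (at x within Pih)" for x
    by (auto intro!: derivative_eq_intros simp: inner_commute)
  have "\<exists>w\<in>hint Pih. \<forall>y\<in>Pih. w \<bullet> c + h w \<le> y \<bullet> c + h y"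
    using perturbed_min_exists[OF linear_cost_convex[of c], where gq = "\<lambda>_. c" and C = "norm c"] D
    by simp
  then obtain w where w: "w \<in> hint Pih" and min: "\<forall>y\<in>Pih. w \<bullet> c + h w \<le> y \<bullet> c + h y"
    by blast
  have "w \<in> Pih" using w hint_subset by blast
  from best_response_eqI[OF this] min have "\<omega> = w" by (simp add: \<omega>_def c_def)
  then show "\<omega> \<in> hint Pih" "\<forall>y\<in>Pih. \<omega> \<bullet> path_cost \<pi> + h \<omega> \<le> y \<bullet> path_cost \<pi> + h y"
    using w min by (simp_all add: c_def)
  show "Phi (path_cost \<pi> + gh \<omega>) = 0"
    using interior_min_stationary[OF w min perturbed_deriv[OF w D]] \<open>\<omega> = w\<close> by (simp add: c_def)
qed

lemma potential_perturbed_strict_convex: "strict_convex_on Pih (\<lambda>\<pi>. potential \<pi> + h \<pi>)"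
  using potential_convex h_strict by (rule strict_convex_on_add)

lemma potential_perturbed_min_exists:
  "\<exists>\<pi>\<in>hint Pih. \<forall>y\<in>Pih. potential \<pi> + h \<pi> \<le> potential y + h y"
proof -
  obtain C where "\<forall>\<pi>\<in>Pih. norm (path_cost \<pi>) \<le> C" using path_cost_bounded by blast
  then show ?thesis using perturbed_min_exists[OF potential_convex, where gq = path_cost] potential_deriv
    by blast
qed

lemma fixed_point_iff_min:
  assumes \<pi>: "\<pi> \<in> hint Pih"
  shows "Fh E mu dmu pth Pih h (Aflow pth \<pi>) = \<pi> \<longleftrightarrow>
    (\<forall>y\<in>Pih. potential \<pi> + h \<pi> \<le> potential y + h y)"
proof -
  have \<pi>K: "\<pi> \<in> Pih" using \<pi> hint_subset by blast
  have D: "((\<lambda>\<pi>. potential \<pi> + h \<pi>) has_derivative (\<lambda>y. (path_cost \<pi> + gh \<pi>) \<bullet> y)) (at \<pi> within Pih)"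
    using perturbed_deriv[OF \<pi> potential_deriv[OF \<pi>K]] .
  show ?thesis
  proof
    assume "Fh E mu dmu pth Pih h (Aflow pth \<pi>) = \<pi>"
    then have "Phi (path_cost \<pi> + gh \<pi>) = 0" using best_response_interior(3)[OF \<pi>K] by simp
    with stationary_imp_min[OF strict_convex_imp_convex_on[OF Pih_convex potential_perturbed_strict_convex]
        Pih_hyperP \<pi>K _ D]
    show "\<forall>y\<in>Pih. potential \<pi> + h \<pi> \<le> potential y + h y" by blast
  next
    assume "\<forall>y\<in>Pih. potential \<pi> + h \<pi> \<le> potential y + h y"
    from interior_min_stationary[OF \<pi> this D] have stat: "Phi (path_cost \<pi> + gh \<pi>) = 0" .
    have "((\<lambda>\<omega>. \<omega> \<bullet> path_cost \<pi>) has_derivative (\<lambda>y. path_cost \<pi> \<bullet> y)) (at \<pi> within Pih)"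
      by (auto intro!: derivative_eq_intros simp: inner_commute)
    from stationary_imp_min[OF strict_convex_imp_convex_on[OF Pih_convex best_response_strict_convex]
        Pih_hyperP \<pi>K stat perturbed_deriv[OF \<pi> this]]
    show "Fh E mu dmu pth Pih h (Aflow pth \<pi>) = \<pi>" by (rule best_response_eqI[OF \<pi>K])
  qed
qed

lemma fixed_point_iff_eq_min:
  assumes \<pi>h: "\<pi>h \<in> hint Pih" "\<forall>y\<in>Pih. potential \<pi>h + h \<pi>h \<le> potential y + h y"
    and \<pi>: "\<pi> \<in> hint Pih"
  shows "Fh E mu dmu pth Pih h (Aflow pth \<pi>) = \<pi> \<longleftrightarrow> \<pi> = \<pi>h"
proof
  assume "Fh E mu dmu pth Pih h (Aflow pth \<pi>) = \<pi>"
  then have "\<forall>y\<in>Pih. potential \<pi> + h \<pi> \<le> potential y + h y" using fixed_point_iff_min[OF \<pi>] by blast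
  then show "\<pi> = \<pi>h"
    using strict_convex_min_unique[OF potential_perturbed_strict_convex Pih_convex _ _ _ \<pi>h(2)]
      \<pi> \<pi>h(1) hint_subset by blast
qed (use fixed_point_iff_min[OF \<pi>h(1)] \<pi>h(2) in simp)

text \<open>By stationarity of the best response omega, Upsilon equals the first-order decrease of the
  perturbed cost from pi to omega, which dominates the Bregman gap of the strictly convex h.\<close>
lemma Upsilon_nonneg:
  assumes \<pi>: "\<pi> \<in> hint Pih"
  defines "\<omega> \<equiv> Fh E mu dmu pth Pih h (Aflow pth \<pi>)"
  defines "\<Upsilon> \<equiv> (Phi (gh \<omega>) - Phi (gh \<pi>)) \<bullet> (\<omega> - \<pi>)"
  shows "0 \<le> \<Upsilon>" and "\<Upsilon> = 0 \<Longrightarrow> \<omega> = \<pi>"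
proof -
  define c where "c = path_cost \<pi>"
  have \<pi>K: "\<pi> \<in> Pih" using \<pi> hint_subset by blast
  note br = best_response_interior[OF \<pi>K, folded \<omega>_def c_def]
  have \<omega>K: "\<omega> \<in> Pih" using br(1) hint_subset by blast
  have "Phi c + Phi (gh \<omega>) = 0" using br(3) by (simp add: Phi_add)
  then have "Phi (gh \<omega>) - Phi (gh \<pi>) = - Phi (c + gh \<pi>)"
    by (simp add: Phi_add eq_neg_iff_add_eq_0[symmetric] add.commute)
  moreover have "Phi (c + gh \<pi>) \<bullet> (\<omega> - \<pi>) = (c + gh \<pi>) \<bullet> (\<omega> - \<pi>)"
    using sum_diff_hyperP \<omega>K \<pi>K Pih_hyperP by (intro Phi_inner) auto
  ultimately have "\<Upsilon> = - ((c + gh \<pi>) \<bullet> (\<omega> - \<pi>))" by (simp add: \<Upsilon>_def)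
  then have \<Upsilon>_eq: "\<Upsilon> = (\<pi> \<bullet> c - \<omega> \<bullet> c) - gh \<pi> \<bullet> (\<omega> - \<pi>)"
    by (simp add: inner_add_left inner_diff_right inner_commute[of c])
  have min: "\<omega> \<bullet> c + h \<omega> \<le> \<pi> \<bullet> c + h \<pi>" using br(2) \<pi>K by blast
  note h_deriv = h_grad[rule_format, OF \<pi>]
  have tangent: "h \<pi> + gh \<pi> \<bullet> (\<omega> - \<pi>) \<le> h \<omega>"
    using convex_on_above_tangent_within[OF strict_convex_imp_convex_on[OF Pih_convex h_strict]
        \<pi>K \<omega>K h_deriv] .
  show "0 \<le> \<Upsilon>" using \<Upsilon>_eq min tangent by linarith
  show "\<omega> = \<pi>" if "\<Upsilon> = 0"
  proof (rule ccontr)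
    assume "\<omega> \<noteq> \<pi>"
    then have "h \<pi> + gh \<pi> \<bullet> (\<omega> - \<pi>) < h \<omega>"
      using strict_convex_above_tangent_within[OF Pih_convex h_strict \<pi>K \<omega>K _ h_deriv] by blast
    then show False using \<Upsilon>_eq min that by linarith
  qed
qed

lemma Upsilon_properties:
  assumes \<pi>h: "\<pi>h \<in> hint Pih" "\<forall>y\<in>Pih. potential \<pi>h + h \<pi>h \<le> potential y + h y"
    and \<pi>: "\<pi> \<in> hint Pih"
  defines "\<omega> \<equiv> Fh E mu dmu pth Pih h (Aflow pth \<pi>)"
  defines "\<Upsilon> \<equiv> (Phi (gh \<omega>) - Phi (gh \<pi>)) \<bullet> (\<omega> - \<pi>)"
  shows "\<omega> \<in> hint Pih \<and> 0 \<le> \<Upsilon> \<and> (\<Upsilon> = 0 \<longleftrightarrow> \<pi> = \<pi>h)"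
proof -
  have "\<Upsilon> = 0 \<longleftrightarrow> \<omega> = \<pi>"
    using Upsilon_nonneg(2)[OF \<pi>] by (auto simp: \<omega>_def \<Upsilon>_def)
  then show ?thesis
    using best_response_interior(1) Upsilon_nonneg(1)[OF \<pi>] fixed_point_iff_eq_min[OF \<pi>h \<pi>] \<pi> hint_subset
    by (auto simp: \<omega>_def \<Upsilon>_def)
qed

end

theorem mainTheorem12:
  fixes n :: nat and E :: "link set"
    and mu dmu :: "link \<Rightarrow> real \<Rightarrow> real"
    and pth :: "'p::finite \<Rightarrow> nat list"
    and Pih :: "(real^'p) set" and h :: "real^'p \<Rightarrow> real" and gh :: "real^'p \<Rightarrow> real^'p"
  assumes E_sub: "E \<subseteq> {0..n} \<times> {0..n}"
    and E_ord: "\<forall>(u,v)\<in>E. u < v"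
    and src: "\<forall>v\<in>{0..n}. (\<not> (\<exists>u. (u,v) \<in> E)) \<longleftrightarrow> v = 0"
    and snk: "\<forall>u\<in>{0..n}. (\<not> (\<exists>v. (u,v) \<in> E)) \<longleftrightarrow> u = n"
    and reach: "\<forall>v\<in>{0..n}. (v, n) \<in> E\<^sup>*"
    and mu_deriv: "\<forall>e\<in>E. \<forall>x\<ge>0. (mu e has_real_derivative dmu e x) (at x within {0..})"
    and dmu_cont: "\<forall>e\<in>E. continuous_on {0..} (dmu e)"
    and mu_mono: "\<forall>e\<in>E. strict_mono_on {0..} (mu e)"
    and mu_concave: "\<forall>e\<in>E. strict_concave_on {0..} (mu e)"
    and mu_zero: "\<forall>e\<in>E. mu e 0 = 0"
    and mincut_gt: "mincut E n mu > 1"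
    and pth_bij: "bij_betw pth UNIV (Paths E n)"
    and Pih_closed: "closed Pih"
    and Pih_convex: "convex Pih"
    and Pih_sub: "Pih \<subseteq> PiSet E mu pth"
    and Pih_int: "hint Pih \<noteq> {}"
    and h_strict: "strict_convex_on Pih h"
    and h_grad: "\<forall>x\<in>hint Pih. (h has_derivative (\<lambda>y. gh x \<bullet> y)) (at x within Pih)"
    and h_twice: "\<forall>x\<in>hint Pih. gh differentiable (at x within Pih)"
    and h_blowup: "\<forall>b\<in>hbd Pih. filterlim (\<lambda>x. norm (Phi (gh x))) at_top (at b within hint Pih)"
  shows "strict_convex_on Pih (psi E mu dmu pth h) \<and>
    (\<exists>\<pi>h. \<pi>h \<in> Pih \<and> (\<forall>\<pi>\<in>Pih. \<pi> \<noteq> \<pi>h \<longrightarrow> psi E mu dmu pth h \<pi>h < psi E mu dmu pth h \<pi>) \<and>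
       \<pi>h \<in> hint Pih \<and>
       Fh E mu dmu pth Pih h (Aflow pth \<pi>h) = \<pi>h \<and>
       (\<forall>\<pi>\<in>hint Pih.
          let \<omega> = Fh E mu dmu pth Pih h (Aflow pth \<pi>);
              \<Upsilon> = (Phi (gh \<omega>) - Phi (gh \<pi>)) \<bullet> (\<omega> - \<pi>)
          in \<omega> \<in> hint Pih \<and> \<Upsilon> \<ge> 0 \<and> (\<Upsilon> = 0 \<longleftrightarrow> \<pi> = \<pi>h)))"
proof -
  have "finite E" using E_sub by (rule finite_subset) simp
  interpret perturbed_routing E mu dmu pth Pih h gh
    using \<open>finite E\<close> mu_deriv mu_mono mu_concave mu_zero Pih_closed Pih_convex Pih_sub Pih_int
      h_strict h_grad h_blowup
    by unfold_locales (auto simp: flow_density_def)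
  have psi: "psi E mu dmu pth h = (\<lambda>\<pi>. potential \<pi> + h \<pi>)" by (simp add: fun_eq_iff psi_eq)
  obtain \<pi>h where \<pi>h: "\<pi>h \<in> hint Pih" and min: "\<forall>y\<in>Pih. potential \<pi>h + h \<pi>h \<le> potential y + h y"
    using potential_perturbed_min_exists by blast
  have "\<pi>h \<in> Pih" using \<pi>h hint_subset by blast
  moreover have "\<forall>\<pi>\<in>Pih. \<pi> \<noteq> \<pi>h \<longrightarrow> potential \<pi>h + h \<pi>h < potential \<pi> + h \<pi>"
    using strict_convex_min_strict[OF potential_perturbed_strict_convex Pih_convex \<open>\<pi>h \<in> Pih\<close> min] by blast
  moreover have "Fh E mu dmu pth Pih h (Aflow pth \<pi>h) = \<pi>h"
    using fixed_point_iff_eq_min[OF \<pi>h min \<pi>h] by simp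
  ultimately show ?thesis
    unfolding psi Let_def
    using potential_perturbed_strict_convex \<pi>h Upsilon_properties[OF \<pi>h min] by blast
qed

end
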